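(* Let $n\ge 2$. There is no finite subset $Y\subseteq\mathbb{S}^{n-1}$ which is a spherical design of harmonic index $\{8,2\}$ and has \[|Y|=\frac{n(n+6)(n+5)(n^2+15n+8)^2}{168(n^3+27n^2+356n-240)},\] i.e. there exists no tight spherical design of harmonic index $\{8,2\}$ on $\mathbb{S}^{n-1}$.
   Context: $\mathbb{S}^{n-1}$ is the unit sphere in $\mathbb{R}^n$. For $T\subseteq\mathbb{N}$, a finite $Y\subseteq\mathbb{S}^{n-1}$ is a spherical design of harmonic index $T$ if $\sum_{\mathbf{x}\in Y}f(\mathbf{x})=0$ for every real homogeneous harmonic polynomial $f$ in $n$ variables whose degree lies in $T$. With Gegenbauer polynomials $Q_{n,k}$ (orthogonal on $[-1,1]$ for the weight $(1-x^2)^{(n-3)/2}$, $Q_{n,k}(1)=\binom{n+k-1}{n-1}-\binom{n+k-3}{n-1}$), the polynomial $Q_{n,8}(x)+f_2Q_{n,2}(x)$ with $f_2=\frac{(n-2)(n+4)(n+5)(n+6)(n+14)}{90(n+12)^2}$ equals $a(x^2-\alpha^2)^2(x^2-\beta^2)^2-c_{n,T}$ with $a>0$, $\alpha^2,\beta^2=\frac{7}{n+12}\pm\frac{\sqrt{42(n+5)(n+10)}}{(n+10)(n+12)}$, $c_{n,T}=\frac{(n+2)(n+4)(n+5)(n+8)(n+14)(n^3+27n^2+356n-240)}{240(n+10)(n+12)^3}$, giving the lower bound $|Y|\ge b_{n,T}$ equal to the displayed cardinality for designs of harmonic index $\{8,2\}$; a design attaining it is called tight. *)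

theory Defs
  imports "HOL-Analysis.Analysis"
begin

text \<open>Real polynomials in the variables x_i (i :: 'n, a finite index type, so n = CARD('n))
  are represented by their coefficient functions on exponent vectors (multi-indices)
  alpha :: 'n \<Rightarrow> nat.\<close>

definition multi_indices :: "nat \<Rightarrow> ('n::finite \<Rightarrow> nat) set" where
  "multi_indices k = {\<alpha>. (\<Sum>i\<in>UNIV. \<alpha> i) = k}"

definition homogeneous_coeffs :: "nat \<Rightarrow> (('n::finite \<Rightarrow> nat) \<Rightarrow> real) \<Rightarrow> bool" where
  "homogeneous_coeffs k c \<longleftrightarrow> (\<forall>\<alpha>. c \<alpha> \<noteq> 0 \<longrightarrow> \<alpha> \<in> multi_indices k)"

definition hpoly_eval :: "nat \<Rightarrow> (('n::finite \<Rightarrow> nat) \<Rightarrow> real) \<Rightarrow> real^'n \<Rightarrow> real" where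
  "hpoly_eval k c x = (\<Sum>\<alpha>\<in>multi_indices k. c \<alpha> * (\<Prod>i\<in>UNIV. (x $ i) ^ (\<alpha> i)))"

text \<open>Harmonicity: the Laplacian vanishes. Since the Laplacian of the monomial x^alpha is
  sum_i alpha_i (alpha_i - 1) x^(alpha - 2 e_i), the coefficient of x^beta in the Laplacian
  of sum c_alpha x^alpha is sum_i (beta_i + 2)(beta_i + 1) c_(beta + 2 e_i).\<close>
definition harmonic_coeffs :: "(('n::finite \<Rightarrow> nat) \<Rightarrow> real) \<Rightarrow> bool" where
  "harmonic_coeffs c \<longleftrightarrow>
     (\<forall>\<beta>::'n \<Rightarrow> nat. (\<Sum>i\<in>UNIV. real ((\<beta> i + 2) * (\<beta> i + 1)) * c (\<beta>(i := \<beta> i + 2))) = 0)"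

definition unit_sphere :: "(real^'n::finite) set" where
  "unit_sphere = {x. norm x = 1}"

definition harmonic_index_design :: "nat set \<Rightarrow> (real^'n::finite) set \<Rightarrow> bool" where
  "harmonic_index_design T Y \<longleftrightarrow>
     finite Y \<and> Y \<subseteq> unit_sphere \<and>
     (\<forall>k\<in>T. \<forall>c :: ('n \<Rightarrow> nat) \<Rightarrow> real. homogeneous_coeffs k c \<and> harmonic_coeffs c
        \<longrightarrow> (\<Sum>x\<in>Y. hpoly_eval k c x) = 0)"

end

theory Submission
  imports Defs
begin

(* A tight design Y of harmonic index {8, 2} attains the linear programming bound given by the
   annihilator a (t^2 - alpha^2)^2 (t^2 - beta^2)^2 = Q_{n,8}(t) + f_2 Q_{n,2}(t) + c_{n,T}.

   First, b_{n,T} must be an integer. A Bezout identity shows that the denominator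
   n^3 + 27 n^2 + 356 n - 240 then divides 7468070400, which bounds n, and a finite check leaves
   only n = 2, 4, 9.

   Second, fix y in Y and test the design on the zonal harmonics of degrees 8 and 2 with pole y.
   The sum over x in Y of ((x . y)^2 - alpha^2)^2 ((x . y)^2 - beta^2)^2 then equals its term for
   x = y alone, so (x . y)^2 is alpha^2 or beta^2 for all x <> y. Summing
   (x . y)^2 - (alpha^2 + beta^2) / 2 = +-(alpha^2 - beta^2) / 2 over Y - {y} and evaluating the
   left-hand side with the degree-2 condition makes k^2 = 2, 48, 6897 for some integer k when
   n = 2, 4, 9 respectively; none of these is a square. *)

section \<open>Formal power series in several variables\<close>

lemma finite_atMost_multi_index [simp]: "finite {..\<beta> :: 'n::finite \<Rightarrow> nat}"
proof (rule finite_subset)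
  show "{..\<beta>} \<subseteq> PiE UNIV (\<lambda>i. {..\<beta> i})"
    by (auto simp: le_fun_def PiE_def Pi_def)
qed (rule finite_PiE, auto)

lemma multi_index_add_diff_inverse: "\<alpha> \<le> \<beta> \<Longrightarrow> (\<lambda>i. \<alpha> i + (\<beta> i - \<alpha> i)) = (\<beta> :: 'n \<Rightarrow> nat)"
  by (auto simp: le_fun_def fun_eq_iff)

lemma multi_index_diff_diff: "\<alpha> \<le> \<beta> \<Longrightarrow> \<beta> - (\<beta> - \<alpha>) = (\<alpha> :: 'n \<Rightarrow> nat)"
  by (auto simp: le_fun_def fun_eq_iff)

lemma multi_index_diff_diff_add: "\<beta> - \<gamma> - \<delta> = (\<beta> :: 'n \<Rightarrow> nat) - (\<lambda>i. \<gamma> i + \<delta> i)"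
  by (auto simp: fun_eq_iff)

lemma multi_index_add_diff_cancel_left: "(\<lambda>i. \<gamma> i + \<delta> i) - \<gamma> = (\<delta> :: 'n \<Rightarrow> nat)"
  by (auto simp: fun_eq_iff)

lemma multi_index_le_diff_iff: "\<gamma> \<le> \<beta> \<Longrightarrow> \<delta> \<le> \<beta> - \<gamma> \<longleftrightarrow> (\<lambda>i. \<gamma> i + \<delta> i) \<le> (\<beta> :: 'n \<Rightarrow> nat)"
  by (auto simp: le_fun_def) (metis le_diff_conv2 add.commute)+

lemma multi_index_diff_le: "\<beta> - \<alpha> \<le> (\<beta> :: 'n \<Rightarrow> nat)"
  by (simp add: le_fun_def)

lemma multi_index_upd_Suc_le_iff: "\<alpha>(i := Suc (\<alpha> i)) \<le> \<beta>(i := Suc (\<beta> i)) \<longleftrightarrow> \<alpha> \<le> (\<beta> :: 'n \<Rightarrow> nat)"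
  unfolding le_fun_def by (auto split: if_splits)

lemma multi_index_upd_pred_le_iff:
  "\<alpha> i \<noteq> 0 \<Longrightarrow> \<alpha>(i := \<alpha> i - Suc 0) \<le> \<beta> \<longleftrightarrow> \<alpha> \<le> (\<beta>(i := Suc (\<beta> i)) :: 'n \<Rightarrow> nat)"
  unfolding le_fun_def by (auto split: if_splits)

lemma multi_index_le_add: "\<gamma> \<le> (\<lambda>i. \<gamma> i + (\<delta> :: 'n \<Rightarrow> nat) i)"
  by (simp add: le_fun_def)

definition coeff_mult :: "(('n::finite \<Rightarrow> nat) \<Rightarrow> real) \<Rightarrow> (('n \<Rightarrow> nat) \<Rightarrow> real) \<Rightarrow> ('n \<Rightarrow> nat) \<Rightarrow> real"
  where "coeff_mult p q \<beta> = (\<Sum>\<alpha>\<in>{..\<beta>}. p \<alpha> * q (\<beta> - \<alpha>))"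

lemma coeff_mult_commute: "coeff_mult p q = coeff_mult q p"
proof
  fix \<beta>
  show "coeff_mult p q \<beta> = coeff_mult q p \<beta>"
    unfolding coeff_mult_def
    by (rule sum.reindex_bij_witness[where i="\<lambda>\<alpha>. \<beta> - \<alpha>" and j="\<lambda>\<alpha>. \<beta> - \<alpha>"])
       (auto simp: multi_index_diff_diff multi_index_diff_le)
qed

lemma coeff_mult_assoc: "coeff_mult (coeff_mult p q) r = coeff_mult p (coeff_mult q r)"
proof
  fix \<beta>
  have "coeff_mult (coeff_mult p q) r \<beta>
      = (\<Sum>(\<alpha>, \<gamma>)\<in>Sigma {..\<beta>} atMost. p \<gamma> * q (\<alpha> - \<gamma>) * r (\<beta> - \<alpha>))"
    unfolding coeff_mult_def by (simp add: sum.Sigma sum_distrib_right)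
  also have "\<dots> = (\<Sum>(\<gamma>, \<delta>)\<in>Sigma {..\<beta>} (\<lambda>\<gamma>. {..\<beta> - \<gamma>}). p \<gamma> * (q \<delta> * r (\<beta> - \<gamma> - \<delta>)))"
    by (rule sum.reindex_bij_witness[where i="\<lambda>(\<gamma>, \<delta>). (\<lambda>i. \<gamma> i + \<delta> i, \<gamma>)"
          and j="\<lambda>(\<alpha>, \<gamma>). (\<gamma>, \<alpha> - \<gamma>)"])
       (auto simp: multi_index_add_diff_inverse multi_index_diff_diff_add multi_index_le_add
          multi_index_add_diff_cancel_left multi_index_le_diff_iff intro: order_trans)
  also have "\<dots> = coeff_mult p (coeff_mult q r) \<beta>"
    unfolding coeff_mult_def by (simp add: sum.Sigma sum_distrib_left)
  finally show "coeff_mult (coeff_mult p q) r \<beta> = coeff_mult p (coeff_mult q r) \<beta>" .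
qed

lemma coeff_mult_add_right: "coeff_mult p (\<lambda>\<alpha>. q \<alpha> + r \<alpha>) = (\<lambda>\<beta>. coeff_mult p q \<beta> + coeff_mult p r \<beta>)"
  by (auto simp: coeff_mult_def fun_eq_iff algebra_simps sum.distrib)

lemma coeff_mult_const_left: "coeff_mult (\<lambda>\<alpha>. if \<alpha> = (\<lambda>_. 0) then s else 0) p = (\<lambda>\<beta>. s * p \<beta>)"
proof
  fix \<beta>
  have "coeff_mult (\<lambda>\<alpha>. if \<alpha> = (\<lambda>_. 0) then s else 0) p \<beta>
      = (\<Sum>\<alpha>\<in>{..\<beta>}. if \<alpha> = (\<lambda>_. 0) then s * p (\<beta> - \<alpha>) else 0)"
    unfolding coeff_mult_def by (rule sum.cong) auto
  then show "coeff_mult (\<lambda>\<alpha>. if \<alpha> = (\<lambda>_. 0) then s else 0) p \<beta> = s * p \<beta>"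
    by (simp add: le_fun_def fun_diff_def)
qed

(* Coefficient functions are unrestricted, so these are formal power series; the Cauchy product
   only needs the finiteness of {..beta}. Every series used below is a polynomial. *)

typedef (overloaded) 'n mfps = "UNIV :: (('n::finite \<Rightarrow> nat) \<Rightarrow> real) set"
  morphisms mcoeff Abs_mfps
  by auto

setup_lifting type_definition_mfps

instantiation mfps :: (finite) comm_ring_1
begin

lift_definition zero_mfps :: "'a mfps" is "\<lambda>_. 0" .
lift_definition one_mfps :: "'a mfps" is "\<lambda>\<alpha>. if \<alpha> = (\<lambda>_. 0) then 1 else 0" .
lift_definition plus_mfps :: "'a mfps \<Rightarrow> 'a mfps \<Rightarrow> 'a mfps" is "\<lambda>p q \<alpha>. p \<alpha> + q \<alpha>" .
lift_definition minus_mfps :: "'a mfps \<Rightarrow> 'a mfps \<Rightarrow> 'a mfps" is "\<lambda>p q \<alpha>. p \<alpha> - q \<alpha>" .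
lift_definition uminus_mfps :: "'a mfps \<Rightarrow> 'a mfps" is "\<lambda>p \<alpha>. - p \<alpha>" .
lift_definition times_mfps :: "'a mfps \<Rightarrow> 'a mfps \<Rightarrow> 'a mfps" is coeff_mult .

instance
proof
  fix a b c :: "'a mfps"
  show "a * b * c = a * (b * c)" by transfer (rule coeff_mult_assoc)
  show "a * b = b * a" by transfer (rule coeff_mult_commute)
  show "1 * a = a" by transfer (simp add: coeff_mult_const_left)
  show "(a + b) * c = a * c + b * c" by transfer (metis coeff_mult_add_right coeff_mult_commute)
  show "a + b + c = a + (b + c)" by transfer (simp add: algebra_simps)
  show "a + b = b + a" by transfer (simp add: algebra_simps)
  show "0 + a = a" by transfer simp
  show "- a + a = 0" by transfer simp
  show "a - b = a + - b" by transfer simp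
  show "(0 :: 'a mfps) \<noteq> 1" by transfer (auto simp: fun_eq_iff)
qed

end

lemma mcoeff_sum: "mcoeff (\<Sum>i\<in>A. f i) \<beta> = (\<Sum>i\<in>A. mcoeff (f i) \<beta>)"
  by (induction A rule: infinite_finite_induct) (auto simp: zero_mfps.rep_eq plus_mfps.rep_eq)

lift_definition mconst :: "real \<Rightarrow> 'n::finite mfps" is "\<lambda>s \<alpha>. if \<alpha> = (\<lambda>_. 0) then s else 0" .

lemma mcoeff_mconst_mult: "mcoeff (mconst s * p) \<beta> = s * mcoeff p \<beta>"
  by transfer (simp add: coeff_mult_const_left)

lemma mconst_mult: "mconst a * mconst b = mconst (a * b)"
  by (rule mcoeff_inject[THEN iffD1]) (auto simp: fun_eq_iff mcoeff_mconst_mult mconst.rep_eq)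

lemma mconst_add: "mconst a + mconst b = mconst (a + b)"
  by transfer (auto simp: fun_eq_iff)

lemma mconst_0 [simp]: "mconst 0 = 0"
  by transfer (auto simp: fun_eq_iff)

lemma mconst_1 [simp]: "mconst 1 = 1"
  by transfer (simp add: fun_eq_iff)

lemma mconst_sum: "mconst (\<Sum>i\<in>A. f i) = (\<Sum>i\<in>A. mconst (f i))"
  by (induction A rule: infinite_finite_induct) (auto simp: mconst_add[symmetric])

lemma of_nat_mfps: "(of_nat m :: 'n::finite mfps) = mconst (real m)"
  by (induction m) (auto simp: mconst_1[symmetric] mconst_add add.commute simp del: mconst_1)

lift_definition mvar :: "'n \<Rightarrow> 'n::finite mfps" is "\<lambda>i \<alpha>. if \<alpha> = (\<lambda>j. if j = i then 1 else 0) then 1 else 0" .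

section \<open>Partial derivatives and the Laplacian\<close>

definition coeff_deriv :: "'n \<Rightarrow> (('n \<Rightarrow> nat) \<Rightarrow> real) \<Rightarrow> ('n \<Rightarrow> nat) \<Rightarrow> real"
  where "coeff_deriv i p \<beta> = real (\<beta> i + 1) * p (\<beta>(i := \<beta> i + 1))"

lemma coeff_mult_deriv_left:
  fixes p q :: "('n::finite \<Rightarrow> nat) \<Rightarrow> real" and i :: 'n and \<beta> :: "'n \<Rightarrow> nat"
  defines "\<beta>' \<equiv> \<beta>(i := \<beta> i + 1)"
  shows "coeff_mult (coeff_deriv i p) q \<beta> = (\<Sum>\<alpha>\<in>{..\<beta>'}. real (\<alpha> i) * p \<alpha> * q (\<beta>' - \<alpha>))"
proof -
  have "coeff_mult (coeff_deriv i p) q \<beta>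
      = (\<Sum>\<alpha>\<in>{\<alpha>\<in>{..\<beta>'}. \<alpha> i \<noteq> 0}. real (\<alpha> i) * p \<alpha> * q (\<beta>' - \<alpha>))"
    unfolding coeff_mult_def coeff_deriv_def
    by (rule sum.reindex_bij_witness[where i="\<lambda>\<alpha>. \<alpha>(i := \<alpha> i - 1)" and j="\<lambda>\<alpha>. \<alpha>(i := \<alpha> i + 1)"])
       (auto simp: \<beta>'_def multi_index_upd_Suc_le_iff multi_index_upd_pred_le_iff fun_eq_iff intro!: arg_cong[where f=q])
  also have "\<dots> = (\<Sum>\<alpha>\<in>{..\<beta>'}. real (\<alpha> i) * p \<alpha> * q (\<beta>' - \<alpha>))"
    by (rule sum.mono_neutral_left) auto
  finally show ?thesis .
qed

lemma coeff_mult_deriv_right: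
  fixes p q :: "('n::finite \<Rightarrow> nat) \<Rightarrow> real" and i :: 'n and \<beta> :: "'n \<Rightarrow> nat"
  defines "\<beta>' \<equiv> \<beta>(i := \<beta> i + 1)"
  shows "coeff_mult p (coeff_deriv i q) \<beta> = (\<Sum>\<alpha>\<in>{..\<beta>'}. real (\<beta>' i - \<alpha> i) * p \<alpha> * q (\<beta>' - \<alpha>))"
proof -
  have "coeff_mult p (coeff_deriv i q) \<beta> = (\<Sum>\<alpha>\<in>{..\<beta>}. real (\<beta>' i - \<alpha> i) * p \<alpha> * q (\<beta>' - \<alpha>))"
    unfolding coeff_mult_def coeff_deriv_def
  proof (rule sum.cong)
    fix \<alpha> assume "\<alpha> \<in> {..\<beta>}"
    then have "\<alpha> i \<le> \<beta> i" by (simp add: le_fun_def)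
    then have "(\<beta> - \<alpha>)(i := (\<beta> - \<alpha>) i + 1) = \<beta>' - \<alpha>" and "(\<beta> - \<alpha>) i + 1 = \<beta>' i - \<alpha> i"
      by (auto simp: \<beta>'_def fun_eq_iff)
    then show "p \<alpha> * (real ((\<beta> - \<alpha>) i + 1) * q ((\<beta> - \<alpha>)(i := (\<beta> - \<alpha>) i + 1)))
        = real (\<beta>' i - \<alpha> i) * p \<alpha> * q (\<beta>' - \<alpha>)"
      by simp
  qed simp
  also have "\<dots> = (\<Sum>\<alpha>\<in>{..\<beta>'}. real (\<beta>' i - \<alpha> i) * p \<alpha> * q (\<beta>' - \<alpha>))"
  proof (rule sum.mono_neutral_left)
    show "{..\<beta>} \<subseteq> {..\<beta>'}"
      by (auto simp: \<beta>'_def le_fun_def le_SucI)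
    show "\<forall>\<alpha>\<in>{..\<beta>'} - {..\<beta>}. real (\<beta>' i - \<alpha> i) * p \<alpha> * q (\<beta>' - \<alpha>) = 0"
      by (auto simp: \<beta>'_def le_fun_def split: if_splits) (metis not_less_eq_eq)
  qed simp
  finally show ?thesis .
qed

lemma coeff_deriv_mult:
  "coeff_deriv i (coeff_mult p q) = (\<lambda>\<beta>. coeff_mult (coeff_deriv i p) q \<beta> + coeff_mult p (coeff_deriv i q) \<beta>)"
proof
  fix \<beta> :: "'a \<Rightarrow> nat"
  define \<beta>' where "\<beta>' = \<beta>(i := \<beta> i + 1)"
  have "coeff_deriv i (coeff_mult p q) \<beta> = (\<Sum>\<alpha>\<in>{..\<beta>'}. real (\<beta>' i) * p \<alpha> * q (\<beta>' - \<alpha>))"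
    unfolding coeff_deriv_def coeff_mult_def \<beta>'_def by (simp add: sum_distrib_left mult.assoc)
  also have "\<dots> = (\<Sum>\<alpha>\<in>{..\<beta>'}. real (\<alpha> i) * p \<alpha> * q (\<beta>' - \<alpha>) + real (\<beta>' i - \<alpha> i) * p \<alpha> * q (\<beta>' - \<alpha>))"
    by (rule sum.cong) (auto simp: le_fun_def algebra_simps)
  finally show "coeff_deriv i (coeff_mult p q) \<beta> = coeff_mult (coeff_deriv i p) q \<beta> + coeff_mult p (coeff_deriv i q) \<beta>"
    by (simp add: coeff_mult_deriv_left coeff_mult_deriv_right \<beta>'_def sum.distrib)
qed

lift_definition mderiv :: "'n \<Rightarrow> 'n::finite mfps \<Rightarrow> 'n mfps" is coeff_deriv .

lemma mderiv_mult: "mderiv i (p * q) = mderiv i p * q + p * mderiv i q"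
  by transfer (rule coeff_deriv_mult)

lemma mderiv_add: "mderiv i (p + q) = mderiv i p + mderiv i q"
  by transfer (auto simp: coeff_deriv_def fun_eq_iff algebra_simps)

lemma mderiv_diff: "mderiv i (p - q) = mderiv i p - mderiv i q"
  by transfer (auto simp: coeff_deriv_def fun_eq_iff algebra_simps)

lemma mderiv_0 [simp]: "mderiv i 0 = 0"
  by transfer (auto simp: coeff_deriv_def fun_eq_iff)

lemma mderiv_sum: "mderiv i (\<Sum>j\<in>A. f j) = (\<Sum>j\<in>A. mderiv i (f j))"
  by (induction A rule: infinite_finite_induct) (auto simp: mderiv_add)

lemma mderiv_mconst [simp]: "mderiv i (mconst s) = 0"
  by transfer (auto simp: coeff_deriv_def fun_eq_iff dest: fun_cong[where x=i])

lemma mderiv_of_nat [simp]: "mderiv i (of_nat m) = 0"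
  by (simp add: of_nat_mfps)

lemma mderiv_1 [simp]: "mderiv i 1 = 0"
  using mderiv_of_nat[of i 1] by simp

lemma mderiv_mvar: "mderiv k (mvar i) = (if k = i then 1 else 0)"
  by transfer (auto simp: coeff_deriv_def fun_eq_iff dest: fun_cong[where x=k])

lemma mderiv_power: "mderiv i (p ^ m) = of_nat m * p ^ (m - 1) * mderiv i p"
proof (induction m)
  case (Suc m)
  then show ?case
    by (cases m) (simp_all add: mderiv_mult algebra_simps)
qed simp

definition laplacian :: "'n::finite mfps \<Rightarrow> 'n mfps"
  where "laplacian p = (\<Sum>i\<in>UNIV. mderiv i (mderiv i p))"

definition grad_inner :: "'n::finite mfps \<Rightarrow> 'n mfps \<Rightarrow> 'n mfps"
  where "grad_inner p q = (\<Sum>i\<in>UNIV. mderiv i p * mderiv i q)"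

lemma laplacian_add: "laplacian (p + q) = laplacian p + laplacian q"
  by (simp add: laplacian_def mderiv_add sum.distrib)

lemma laplacian_diff: "laplacian (p - q) = laplacian p - laplacian q"
  by (simp add: laplacian_def mderiv_diff sum_subtractf)

lemma laplacian_of_nat_mult: "laplacian (of_nat k * p) = of_nat k * laplacian p"
  by (simp add: laplacian_def mderiv_mult sum_distrib_left)

lemma laplacian_mult: "laplacian (p * q) = laplacian p * q + p * laplacian q + 2 * grad_inner p q"
  unfolding laplacian_def grad_inner_def
  by (simp add: mderiv_mult mderiv_add sum.distrib sum_distrib_left sum_distrib_right algebra_simps)

lemma grad_inner_commute: "grad_inner p q = grad_inner q p"
  by (simp add: grad_inner_def mult.commute)

lemma grad_inner_power:
  "grad_inner (p ^ a) (q ^ b) = of_nat a * of_nat b * p ^ (a - 1) * q ^ (b - 1) * grad_inner p q"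
  unfolding grad_inner_def sum_distrib_left
  by (rule sum.cong) (auto simp: mderiv_power algebra_simps)

lemma laplacian_power:
  "laplacian (p ^ m) = of_nat m * p ^ (m - 1) * laplacian p + of_nat (m * (m - 1)) * p ^ (m - 2) * grad_inner p p"
proof (induction m)
  case (Suc m)
  have "laplacian (p ^ Suc m) = laplacian p * p ^ m + p * laplacian (p ^ m) + 2 * grad_inner p (p ^ m)"
    by (simp add: laplacian_mult)
  also have "\<dots> = laplacian p * p ^ m + p * (of_nat m * p ^ (m - 1) * laplacian p
      + of_nat (m * (m - 1)) * p ^ (m - 2) * grad_inner p p) + 2 * (of_nat m * p ^ (m - 1) * grad_inner p p)"
    using grad_inner_power[of p 1 p m] by (simp add: Suc.IH)
  also have "\<dots> = of_nat (Suc m) * p ^ m * laplacian p + of_nat (Suc m * m) * p ^ (m - 1) * grad_inner p p"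
    by (cases m; cases "m - 1") (simp_all add: algebra_simps)
  finally show ?case by simp
qed (simp add: laplacian_def)

lemma mcoeff_laplacian:
  "mcoeff (laplacian p) \<beta> = (\<Sum>i\<in>UNIV. real ((\<beta> i + 2) * (\<beta> i + 1)) * mcoeff p (\<beta>(i := \<beta> i + 2)))"
  unfolding laplacian_def mcoeff_sum
  by (rule sum.cong) (auto simp: mderiv.rep_eq coeff_deriv_def algebra_simps)

lemma harmonic_coeffs_iff_laplacian: "harmonic_coeffs (mcoeff p) \<longleftrightarrow> laplacian p = 0"
  by (auto simp: harmonic_coeffs_def mcoeff_laplacian mcoeff_inject[symmetric] zero_mfps.rep_eq fun_eq_iff)

definition lin_form :: "real^'n \<Rightarrow> 'n::finite mfps"
  where "lin_form y = (\<Sum>j\<in>UNIV. mconst (y $ j) * mvar j)"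

definition sq_norm_form :: "'n::finite mfps"
  where "sq_norm_form = (\<Sum>j\<in>UNIV. mvar j * mvar j)"

lemma mderiv_lin_form: "mderiv i (lin_form y) = mconst (y $ i)"
proof -
  have "mderiv i (lin_form y) = (\<Sum>j\<in>UNIV. if i = j then mconst (y $ j) else 0)"
    unfolding lin_form_def mderiv_sum by (rule sum.cong) (auto simp: mderiv_mult mderiv_mvar)
  then show ?thesis by simp
qed

lemma mderiv_sq_norm_form: "mderiv i sq_norm_form = 2 * mvar i"
proof -
  have "mderiv i sq_norm_form = (\<Sum>j\<in>UNIV. if i = j then 2 * mvar j else 0)"
    unfolding sq_norm_form_def mderiv_sum by (rule sum.cong) (auto simp: mderiv_mult mderiv_mvar)
  then show ?thesis by simp
qed

lemma laplacian_lin_form: "laplacian (lin_form y) = 0"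
  by (simp add: laplacian_def mderiv_lin_form)

lemma laplacian_sq_norm_form: "laplacian (sq_norm_form :: 'n::finite mfps) = of_nat (2 * CARD('n))"
proof -
  have "laplacian (sq_norm_form :: 'n mfps) = (\<Sum>i\<in>(UNIV :: 'n set). 2)"
    unfolding laplacian_def
    by (rule sum.cong) (auto simp: mderiv_sq_norm_form mderiv_mult mderiv_mvar mderiv_of_nat[of _ 2, simplified])
  then show ?thesis by simp
qed

lemma grad_inner_lin_form: "grad_inner (lin_form y) (lin_form y) = mconst (y \<bullet> y)"
  unfolding grad_inner_def inner_vec_def mconst_sum
  by (rule sum.cong) (auto simp: mderiv_lin_form mconst_mult)

lemma grad_inner_sq_norm_form_lin_form: "grad_inner sq_norm_form (lin_form y) = 2 * lin_form y"
  unfolding grad_inner_def mderiv_lin_form mderiv_sq_norm_form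
  unfolding lin_form_def sum_distrib_left
  by (rule sum.cong) (auto simp: algebra_simps)

lemma grad_inner_sq_norm_form: "grad_inner sq_norm_form sq_norm_form = 4 * sq_norm_form"
  unfolding grad_inner_def mderiv_sq_norm_form
  unfolding sq_norm_form_def sum_distrib_left
  by (rule sum.cong) (auto simp: algebra_simps)

lemma laplacian_lin_form_power:
  assumes "y \<bullet> y = 1"
  shows "laplacian (lin_form y ^ a) = of_nat a * (of_nat a - 1) * lin_form y ^ (a - 2)"
proof -
  have "laplacian (lin_form y ^ a) = of_nat a * lin_form y ^ (a - 1) * 0
      + of_nat (a * (a - 1)) * lin_form y ^ (a - 2) * mconst (y \<bullet> y)"
    by (simp only: laplacian_power laplacian_lin_form grad_inner_lin_form)
  also have "\<dots> = of_nat a * (of_nat a - 1) * lin_form y ^ (a - 2)"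
    using assms by (cases a) (simp_all add: algebra_simps)
  finally show ?thesis .
qed

lemma laplacian_sq_norm_form_power:
  "laplacian (sq_norm_form ^ b :: 'n::finite mfps)
    = 2 * of_nat b * (of_nat CARD('n) + 2 * of_nat b - 2) * sq_norm_form ^ (b - 1)"
proof -
  have "laplacian (sq_norm_form ^ b :: 'n mfps) = of_nat b * sq_norm_form ^ (b - 1) * of_nat (2 * CARD('n))
      + of_nat (b * (b - 1)) * sq_norm_form ^ (b - 2) * (4 * sq_norm_form)"
    by (simp only: laplacian_power laplacian_sq_norm_form grad_inner_sq_norm_form)
  also have "\<dots> = 2 * of_nat b * (of_nat CARD('n) + 2 * of_nat b - 2) * sq_norm_form ^ (b - 1)"
    by (cases b; cases "b - 1") (simp_all add: algebra_simps)
  finally show ?thesis .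
qed

lemma grad_inner_lin_form_power_sq_norm_form_power:
  "grad_inner (lin_form y ^ a) (sq_norm_form ^ b) = 2 * of_nat a * of_nat b * lin_form y ^ a * sq_norm_form ^ (b - 1)"
proof -
  have "grad_inner (lin_form y ^ a) (sq_norm_form ^ b)
      = of_nat a * of_nat b * lin_form y ^ (a - 1) * sq_norm_form ^ (b - 1) * (2 * lin_form y)"
    by (simp only: grad_inner_power grad_inner_commute[of "lin_form y"] grad_inner_sq_norm_form_lin_form)
  also have "\<dots> = 2 * of_nat a * of_nat b * lin_form y ^ a * sq_norm_form ^ (b - 1)"
    by (cases a) (simp_all add: algebra_simps)
  finally show ?thesis .
qed

lemma laplacian_lin_form_power_mult:
  fixes y :: "real^'n::finite"
  assumes "y \<bullet> y = 1"
  shows "laplacian (lin_form y ^ a * sq_norm_form ^ b) =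
      of_nat a * (of_nat a - 1) * lin_form y ^ (a - 2) * sq_norm_form ^ b
    + 2 * of_nat b * (of_nat CARD('n) + 2 * of_nat a + 2 * of_nat b - 2) * lin_form y ^ a * sq_norm_form ^ (b - 1)"
  by (simp only: laplacian_mult laplacian_lin_form_power[OF assms] laplacian_sq_norm_form_power
      grad_inner_lin_form_power_sq_norm_form_power) (simp add: algebra_simps)

lemma homogeneous_coeffs_mult:
  assumes "homogeneous_coeffs k (mcoeff p)" and "homogeneous_coeffs l (mcoeff q)"
  shows "homogeneous_coeffs (k + l) (mcoeff (p * q))"
  unfolding homogeneous_coeffs_def
proof (intro allI impI)
  fix \<beta> assume "mcoeff (p * q) \<beta> \<noteq> 0"
  then obtain \<alpha> where "\<alpha> \<le> \<beta>" and "mcoeff p \<alpha> \<noteq> 0" and "mcoeff q (\<beta> - \<alpha>) \<noteq> 0"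
    unfolding times_mfps.rep_eq coeff_mult_def by (auto elim: sum.not_neutral_contains_not_neutral)
  with assms have "sum \<alpha> UNIV = k" and "sum (\<beta> - \<alpha>) UNIV = l"
    by (auto simp: homogeneous_coeffs_def multi_indices_def)
  moreover have "sum \<beta> UNIV = (\<Sum>i\<in>UNIV. \<alpha> i + (\<beta> i - \<alpha> i))"
    using arg_cong[OF multi_index_add_diff_inverse[OF \<open>\<alpha> \<le> \<beta>\<close>], of "\<lambda>\<gamma>. sum \<gamma> UNIV"] by simp
  ultimately show "\<beta> \<in> multi_indices (k + l)"
    by (simp add: multi_indices_def sum.distrib)
qed

lemma homogeneous_coeffs_add:
  "homogeneous_coeffs k (mcoeff p) \<Longrightarrow> homogeneous_coeffs k (mcoeff q) \<Longrightarrow> homogeneous_coeffs k (mcoeff (p + q))"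
  unfolding homogeneous_coeffs_def plus_mfps.rep_eq by (metis add.right_neutral add_0)

lemma homogeneous_coeffs_diff:
  "homogeneous_coeffs k (mcoeff p) \<Longrightarrow> homogeneous_coeffs k (mcoeff q) \<Longrightarrow> homogeneous_coeffs k (mcoeff (p - q))"
  unfolding homogeneous_coeffs_def minus_mfps.rep_eq by (metis diff_self)

lemma homogeneous_coeffs_sum:
  "(\<And>i. i \<in> A \<Longrightarrow> homogeneous_coeffs k (mcoeff (f i))) \<Longrightarrow> homogeneous_coeffs k (mcoeff (\<Sum>i\<in>A. f i))"
proof (induction A rule: infinite_finite_induct)
  case (insert a A)
  then show ?case by (simp add: homogeneous_coeffs_add)
qed (auto simp: homogeneous_coeffs_def zero_mfps.rep_eq)

lemma homogeneous_coeffs_mconst: "homogeneous_coeffs 0 (mcoeff (mconst s))"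
  by (simp add: homogeneous_coeffs_def multi_indices_def mconst.rep_eq)

lemma homogeneous_coeffs_of_nat: "homogeneous_coeffs 0 (mcoeff (of_nat m))"
  by (simp add: of_nat_mfps homogeneous_coeffs_mconst)

lemma homogeneous_coeffs_power:
  "homogeneous_coeffs k (mcoeff p) \<Longrightarrow> homogeneous_coeffs (m * k) (mcoeff (p ^ m))"
  by (induction m) (auto intro: homogeneous_coeffs_mult homogeneous_coeffs_mconst[of 1, simplified])

lemma homogeneous_coeffs_mvar: "homogeneous_coeffs 1 (mcoeff (mvar i))"
  by (simp add: homogeneous_coeffs_def multi_indices_def mvar.rep_eq)

lemma homogeneous_coeffs_lin_form: "homogeneous_coeffs 1 (mcoeff (lin_form y))"
  unfolding lin_form_def
  by (rule homogeneous_coeffs_sum)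
     (metis add_0 homogeneous_coeffs_mconst homogeneous_coeffs_mult homogeneous_coeffs_mvar)

lemma homogeneous_coeffs_sq_norm_form: "homogeneous_coeffs 2 (mcoeff sq_norm_form)"
  unfolding sq_norm_form_def
  by (rule homogeneous_coeffs_sum) (metis one_add_one homogeneous_coeffs_mult homogeneous_coeffs_mvar)

definition monomial_value :: "('n::finite \<Rightarrow> nat) \<Rightarrow> real^'n \<Rightarrow> real"
  where "monomial_value \<alpha> x = (\<Prod>i\<in>UNIV. (x $ i) ^ (\<alpha> i))"

lemma monomial_value_add: "monomial_value (\<lambda>i. \<alpha> i + \<gamma> i) x = monomial_value \<alpha> x * monomial_value \<gamma> x"
  by (simp add: monomial_value_def power_add prod.distrib)

lemma hpoly_eval_monomial_value: "hpoly_eval k c x = (\<Sum>\<alpha>\<in>multi_indices k. c \<alpha> * monomial_value \<alpha> x)"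
  by (simp add: hpoly_eval_def monomial_value_def)

lemma finite_multi_indices: "finite (multi_indices k :: ('n::finite \<Rightarrow> nat) set)"
proof (rule finite_subset)
  have "\<alpha> i \<le> sum \<alpha> UNIV" for \<alpha> :: "'n \<Rightarrow> nat" and i
    by (rule member_le_sum) simp_all
  then show "multi_indices k \<subseteq> {..(\<lambda>_::'n. k)}"
    by (auto simp: multi_indices_def le_fun_def)
qed simp

lemma multi_indices_0: "multi_indices 0 = {\<lambda>_::'n::finite. 0}"
  by (auto simp: multi_indices_def fun_eq_iff)

lemma hpoly_eval_add: "hpoly_eval k (mcoeff (p + q)) x = hpoly_eval k (mcoeff p) x + hpoly_eval k (mcoeff q) x"
  by (simp add: hpoly_eval_def plus_mfps.rep_eq sum.distrib distrib_right)

lemma hpoly_eval_diff: "hpoly_eval k (mcoeff (p - q)) x = hpoly_eval k (mcoeff p) x - hpoly_eval k (mcoeff q) x"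
  by (simp add: hpoly_eval_def minus_mfps.rep_eq sum_subtractf left_diff_distrib)

lemma hpoly_eval_mconst_mult: "hpoly_eval k (mcoeff (mconst s * p)) x = s * hpoly_eval k (mcoeff p) x"
  by (simp add: hpoly_eval_def mcoeff_mconst_mult sum_distrib_left mult.assoc)

lemma hpoly_eval_of_nat_mult: "hpoly_eval k (mcoeff (of_nat m * p)) x = real m * hpoly_eval k (mcoeff p) x"
  by (simp add: of_nat_mfps hpoly_eval_mconst_mult)

lemma hpoly_eval_sum: "hpoly_eval k (mcoeff (\<Sum>i\<in>A. f i)) x = (\<Sum>i\<in>A. hpoly_eval k (mcoeff (f i)) x)"
  by (simp add: hpoly_eval_def mcoeff_sum sum_distrib_right sum.swap[of _ A])

lemma hpoly_eval_1: "hpoly_eval 0 (mcoeff 1) x = 1"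
  by (simp add: hpoly_eval_def multi_indices_0 one_mfps.rep_eq)

lemma hpoly_eval_mconst: "hpoly_eval 0 (mcoeff (mconst s)) x = s"
  using hpoly_eval_mconst_mult[of 0 s 1 x] by (simp add: hpoly_eval_1)

lemma hpoly_eval_mvar:
  fixes x :: "real^'n::finite"
  shows "hpoly_eval 1 (mcoeff (mvar i)) x = x $ i"
proof -
  define e :: "'n \<Rightarrow> nat" where "e = (\<lambda>j. if j = i then 1 else 0)"
  have "e \<in> multi_indices 1"
    by (simp add: e_def multi_indices_def)
  have "hpoly_eval 1 (mcoeff (mvar i)) x = (\<Sum>\<alpha>\<in>multi_indices 1. if \<alpha> = e then monomial_value e x else 0)"
    unfolding hpoly_eval_monomial_value mvar.rep_eq e_def by (rule sum.cong) auto
  also have "\<dots> = monomial_value e x"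
    using \<open>e \<in> multi_indices 1\<close> by (simp add: finite_multi_indices)
  also have "\<dots> = x $ i"
    unfolding monomial_value_def e_def by (simp add: if_distrib[of "\<lambda>c. _ ^ c"] prod.delta' cong: if_cong)
  finally show ?thesis .
qed

lemma hpoly_eval_mult:
  assumes hp: "homogeneous_coeffs k (mcoeff p)" and hq: "homogeneous_coeffs l (mcoeff q)"
  shows "hpoly_eval (k + l) (mcoeff (p * q)) x = hpoly_eval k (mcoeff p) x * hpoly_eval l (mcoeff q) x"
proof -
  let ?P = "mcoeff p" and ?Q = "mcoeff q"
  have "hpoly_eval (k + l) (mcoeff (p * q)) x
      = (\<Sum>\<beta>\<in>multi_indices (k + l). \<Sum>\<alpha>\<in>{..\<beta>}. ?P \<alpha> * ?Q (\<beta> - \<alpha>) * monomial_value \<beta> x)"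
    by (simp add: hpoly_eval_monomial_value times_mfps.rep_eq coeff_mult_def sum_distrib_right)
  also have "\<dots> = (\<Sum>\<beta>\<in>multi_indices (k + l). \<Sum>\<alpha>\<in>{..\<beta>} \<inter> multi_indices k.
      ?P \<alpha> * ?Q (\<beta> - \<alpha>) * monomial_value \<beta> x)"
    using hp by (intro sum.cong[OF refl] sum.mono_neutral_right) (auto simp: homogeneous_coeffs_def)
  also have "\<dots> = (\<Sum>(\<beta>, \<alpha>)\<in>Sigma (multi_indices (k + l)) (\<lambda>\<beta>. {..\<beta>} \<inter> multi_indices k).
      ?P \<alpha> * ?Q (\<beta> - \<alpha>) * monomial_value \<beta> x)"
    by (rule sum.Sigma) (auto simp: finite_multi_indices)
  also have "\<dots> = (\<Sum>(\<alpha>, \<gamma>)\<in>multi_indices k \<times> multi_indices l.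
      (?P \<alpha> * monomial_value \<alpha> x) * (?Q \<gamma> * monomial_value \<gamma> x))"
    by (rule sum.reindex_bij_witness[where j="\<lambda>(\<beta>, \<alpha>). (\<alpha>, \<beta> - \<alpha>)" and i="\<lambda>(\<alpha>, \<gamma>). (\<lambda>i. \<alpha> i + \<gamma> i, \<alpha>)"])
       (auto simp: multi_indices_def sum.distrib sum_subtractf_nat le_fun_def multi_index_add_diff_cancel_left
          multi_index_add_diff_inverse monomial_value_add[symmetric])
  also have "\<dots> = hpoly_eval k (mcoeff p) x * hpoly_eval l (mcoeff q) x"
    by (simp add: hpoly_eval_monomial_value sum_product sum.cartesian_product)
  finally show ?thesis .
qed

lemma hpoly_eval_power:
  "homogeneous_coeffs k (mcoeff p) \<Longrightarrow> hpoly_eval (m * k) (mcoeff (p ^ m)) x = hpoly_eval k (mcoeff p) x ^ m"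
proof (induction m)
  case (Suc m)
  then show ?case
    using hpoly_eval_mult[OF Suc.prems homogeneous_coeffs_power[OF Suc.prems], of m x] by simp
qed (simp add: hpoly_eval_1)

lemma hpoly_eval_lin_form: "hpoly_eval 1 (mcoeff (lin_form y)) x = x \<bullet> y"
proof -
  have "hpoly_eval (0 + 1) (mcoeff (mconst (y $ j) * mvar j)) x = y $ j * x $ j" for j
    by (simp only: hpoly_eval_mult[OF homogeneous_coeffs_mconst homogeneous_coeffs_mvar]
        hpoly_eval_mconst hpoly_eval_mvar)
  then show ?thesis
    by (simp add: lin_form_def hpoly_eval_sum inner_vec_def mult.commute)
qed

lemma hpoly_eval_sq_norm_form: "hpoly_eval 2 (mcoeff sq_norm_form) x = x \<bullet> x"
proof -
  have "hpoly_eval (1 + 1) (mcoeff (mvar j * mvar j)) x = x $ j * x $ j" for j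
    by (simp only: hpoly_eval_mult[OF homogeneous_coeffs_mvar homogeneous_coeffs_mvar] hpoly_eval_mvar)
  then show ?thesis
    by (simp add: sq_norm_form_def hpoly_eval_sum inner_vec_def numeral_2_eq_2)
qed

lemma homogeneous_coeffs_lin_form_power_mult:
  assumes "a + 2 * b = k"
  shows "homogeneous_coeffs k (mcoeff (of_nat c * (lin_form y ^ a * sq_norm_form ^ b)))"
proof -
  have k: "0 + (a * 1 + b * 2) = k"
    using assms by simp
  show ?thesis
    using homogeneous_coeffs_mult[OF homogeneous_coeffs_of_nat[of c] homogeneous_coeffs_mult[OF
        homogeneous_coeffs_power[OF homogeneous_coeffs_lin_form[of y], of a]
        homogeneous_coeffs_power[OF homogeneous_coeffs_sq_norm_form, of b]]]
    unfolding k .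
qed

lemma hpoly_eval_lin_form_power_mult:
  assumes "a + 2 * b = k" and "x \<bullet> x = 1"
  shows "hpoly_eval k (mcoeff (of_nat c * (lin_form y ^ a * sq_norm_form ^ b))) x = real c * (x \<bullet> y) ^ a"
proof -
  have "hpoly_eval (a * 1 + b * 2) (mcoeff (lin_form y ^ a * sq_norm_form ^ b)) x
      = hpoly_eval (a * 1) (mcoeff (lin_form y ^ a)) x * hpoly_eval (b * 2) (mcoeff (sq_norm_form ^ b)) x"
    by (rule hpoly_eval_mult[OF homogeneous_coeffs_power[OF homogeneous_coeffs_lin_form]
          homogeneous_coeffs_power[OF homogeneous_coeffs_sq_norm_form]])
  also have "\<dots> = (x \<bullet> y) ^ a"
    by (simp only: hpoly_eval_power[OF homogeneous_coeffs_lin_form] hpoly_eval_lin_form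
        hpoly_eval_power[OF homogeneous_coeffs_sq_norm_form] hpoly_eval_sq_norm_form assms(2)) simp
  finally show ?thesis
    using assms(1) by (simp add: hpoly_eval_of_nat_mult mult.commute)
qed

section \<open>Zonal harmonics of degrees 8 and 2\<close>

(* The coefficients are forced by requiring the Laplacian to vanish when |y| = 1; on the unit sphere
   zonal8 y is gegenbauer8 n (x . y), a positive multiple of Q_{n,8}(x . y). *)

definition zonal8 :: "real^'n \<Rightarrow> 'n::finite mfps" where
  "zonal8 y = (let n = CARD('n) in
      of_nat ((n + 12) * (n + 10) * (n + 8) * (n + 6)) * (lin_form y ^ 8 * sq_norm_form ^ 0)
    - of_nat (28 * (n + 10) * (n + 8) * (n + 6)) * (lin_form y ^ 6 * sq_norm_form ^ 1)
    + of_nat (210 * (n + 8) * (n + 6)) * (lin_form y ^ 4 * sq_norm_form ^ 2)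
    - of_nat (420 * (n + 6)) * (lin_form y ^ 2 * sq_norm_form ^ 3)
    + of_nat 105 * (lin_form y ^ 0 * sq_norm_form ^ 4))"

definition zonal2 :: "real^'n \<Rightarrow> 'n::finite mfps" where
  "zonal2 y = of_nat CARD('n) * (lin_form y ^ 2 * sq_norm_form ^ 0) - of_nat 1 * (lin_form y ^ 0 * sq_norm_form ^ 1)"

definition gegenbauer8 :: "real \<Rightarrow> real \<Rightarrow> real" where
  "gegenbauer8 n t = (n + 12) * (n + 10) * (n + 8) * (n + 6) * t ^ 8 - 28 * (n + 10) * (n + 8) * (n + 6) * t ^ 6
     + 210 * (n + 8) * (n + 6) * t ^ 4 - 420 * (n + 6) * t ^ 2 + 105"

lemma laplacian_zonal8: "y \<bullet> y = 1 \<Longrightarrow> laplacian (zonal8 y) = 0"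
  unfolding zonal8_def Let_def
  by (simp only: laplacian_add laplacian_diff laplacian_of_nat_mult laplacian_lin_form_power_mult)
     (simp add: algebra_simps)

lemma laplacian_zonal2: "y \<bullet> y = 1 \<Longrightarrow> laplacian (zonal2 y) = 0"
  unfolding zonal2_def
  by (simp only: laplacian_add laplacian_diff laplacian_of_nat_mult laplacian_lin_form_power_mult)
     (simp add: algebra_simps)

lemma homogeneous_coeffs_zonal8: "homogeneous_coeffs 8 (mcoeff (zonal8 y))"
  unfolding zonal8_def Let_def
  by (intro homogeneous_coeffs_add homogeneous_coeffs_diff homogeneous_coeffs_lin_form_power_mult) simp_all

lemma homogeneous_coeffs_zonal2: "homogeneous_coeffs 2 (mcoeff (zonal2 y))"
  unfolding zonal2_def
  by (intro homogeneous_coeffs_add homogeneous_coeffs_diff homogeneous_coeffs_lin_form_power_mult) simp_all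

lemma hpoly_eval_zonal8:
  fixes y :: "real^'n::finite"
  assumes "x \<bullet> x = 1"
  shows "hpoly_eval 8 (mcoeff (zonal8 y)) x = gegenbauer8 CARD('n) (x \<bullet> y)"
proof -
  note monomial = hpoly_eval_lin_form_power_mult[OF _ assms, of _ _ 8 _ y]
  have terms: "hpoly_eval 8 (mcoeff (of_nat c * (lin_form y ^ 8 * sq_norm_form ^ 0))) x = real c * (x \<bullet> y) ^ 8"
    "hpoly_eval 8 (mcoeff (of_nat c * (lin_form y ^ 6 * sq_norm_form ^ 1))) x = real c * (x \<bullet> y) ^ 6"
    "hpoly_eval 8 (mcoeff (of_nat c * (lin_form y ^ 4 * sq_norm_form ^ 2))) x = real c * (x \<bullet> y) ^ 4"
    "hpoly_eval 8 (mcoeff (of_nat c * (lin_form y ^ 2 * sq_norm_form ^ 3))) x = real c * (x \<bullet> y) ^ 2"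
    "hpoly_eval 8 (mcoeff (of_nat c * (lin_form y ^ 0 * sq_norm_form ^ 4))) x = real c * (x \<bullet> y) ^ 0"
    for c by (rule monomial; simp)+
  show ?thesis
    unfolding zonal8_def Let_def gegenbauer8_def hpoly_eval_add hpoly_eval_diff terms
    by (simp add: algebra_simps)
qed

lemma hpoly_eval_zonal2:
  fixes y :: "real^'n::finite"
  assumes "x \<bullet> x = 1"
  shows "hpoly_eval 2 (mcoeff (zonal2 y)) x = CARD('n) * (x \<bullet> y)\<^sup>2 - 1"
proof -
  note monomial = hpoly_eval_lin_form_power_mult[OF _ assms, of _ _ 2 _ y]
  have terms: "hpoly_eval 2 (mcoeff (of_nat c * (lin_form y ^ 2 * sq_norm_form ^ 0))) x = real c * (x \<bullet> y) ^ 2"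
    "hpoly_eval 2 (mcoeff (of_nat c * (lin_form y ^ 0 * sq_norm_form ^ 1))) x = real c * (x \<bullet> y) ^ 0"
    for c by (rule monomial; simp)+
  show ?thesis
    unfolding zonal2_def hpoly_eval_add hpoly_eval_diff terms by simp
qed

lemma inner_self_eq_1_if_unit_sphere: "x \<in> unit_sphere \<Longrightarrow> x \<bullet> x = 1"
  by (simp add: unit_sphere_def norm_eq_sqrt_inner)

lemma design_sum_eq_0:
  assumes "harmonic_index_design T Y" and "k \<in> T"
    and "homogeneous_coeffs k (mcoeff p)" and "laplacian p = 0"
  shows "(\<Sum>x\<in>Y. hpoly_eval k (mcoeff p) x) = 0"
  using assms by (auto simp: harmonic_index_design_def harmonic_coeffs_iff_laplacian)

lemma design_gegenbauer8_sum:
  fixes Y :: "(real^'n::finite) set"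
  assumes design: "harmonic_index_design T Y" and "8 \<in> T" and y: "y \<in> unit_sphere"
  shows "(\<Sum>x\<in>Y. gegenbauer8 CARD('n) (x \<bullet> y)) = 0"
proof -
  have "Y \<subseteq> unit_sphere"
    using design by (simp add: harmonic_index_design_def)
  then have "(\<Sum>x\<in>Y. gegenbauer8 CARD('n) (x \<bullet> y)) = (\<Sum>x\<in>Y. hpoly_eval 8 (mcoeff (zonal8 y)) x)"
    by (intro sum.cong) (auto simp: hpoly_eval_zonal8 inner_self_eq_1_if_unit_sphere)
  also have "\<dots> = 0"
    using assms by (intro design_sum_eq_0 homogeneous_coeffs_zonal8 laplacian_zonal8 inner_self_eq_1_if_unit_sphere)
  finally show ?thesis .
qed

lemma design_inner_square_sum:
  fixes Y :: "(real^'n::finite) set"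
  assumes design: "harmonic_index_design T Y" and "2 \<in> T" and y: "y \<in> unit_sphere"
  shows "(\<Sum>x\<in>Y. (x \<bullet> y)\<^sup>2) = card Y / CARD('n)"
proof -
  have "Y \<subseteq> unit_sphere"
    using design by (simp add: harmonic_index_design_def)
  then have "(\<Sum>x\<in>Y. CARD('n) * (x \<bullet> y)\<^sup>2 - 1) = (\<Sum>x\<in>Y. hpoly_eval 2 (mcoeff (zonal2 y)) x)"
    by (intro sum.cong) (auto simp: hpoly_eval_zonal2 inner_self_eq_1_if_unit_sphere)
  also have "\<dots> = 0"
    using assms by (intro design_sum_eq_0 homogeneous_coeffs_zonal2 laplacian_zonal2 inner_self_eq_1_if_unit_sphere)
  finally show ?thesis
    by (simp add: sum_subtractf sum_distrib_left[symmetric] field_simps)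
qed

section \<open>The linear programming argument\<close>

lemma sum_power2_eq_power2_term_imp_eq_0:
  fixes g :: "'a \<Rightarrow> real"
  assumes "finite Y" and "y \<in> Y" and "(\<Sum>x\<in>Y. (g x)\<^sup>2) = (g y)\<^sup>2" and "x \<in> Y - {y}"
  shows "g x = 0"
proof -
  have "(\<Sum>x\<in>Y - {y}. (g x)\<^sup>2) = 0"
    using sum.remove[OF assms(1,2), of "\<lambda>x. (g x)\<^sup>2"] assms(3) by simp
  then show ?thesis
    using assms(1,4) by (simp add: sum_nonneg_eq_0_iff)
qed

lemma sum_abs_eq_const_imp_int_multiple:
  fixes w :: "'a \<Rightarrow> real"
  assumes "finite A" and "\<And>x. x \<in> A \<Longrightarrow> \<bar>w x\<bar> = \<sigma>"
  shows "\<exists>k::int. sum w A = \<sigma> * k"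
  using assms
proof (induction A rule: finite_induct)
  case empty
  show ?case by (intro exI[of _ 0]) simp
next
  case (insert a A)
  then obtain k :: int where "sum w A = \<sigma> * k" by blast
  moreover have "w a = \<sigma> \<or> w a = - \<sigma>"
    using insert.prems[of a] by auto
  ultimately show ?case
    using insert.hyps by (auto intro: exI[of _ "k + 1"] exI[of _ "k - 1"] simp: algebra_simps)
qed

lemma sum_power2_eq_const_mult_int_power2:
  fixes w :: "'a \<Rightarrow> real"
  assumes "finite A" and "\<And>x. x \<in> A \<Longrightarrow> (w x)\<^sup>2 = d"
  shows "\<exists>k::int. (sum w A)\<^sup>2 = d * (of_int k)\<^sup>2"
proof (cases "A = {}")
  case False
  then obtain x where "x \<in> A" by blast
  then have "d \<ge> 0" using assms(2) by force
  then have "\<bar>w x\<bar> = sqrt d" if "x \<in> A" for x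
    using assms(2)[OF that] by (metis real_sqrt_abs)
  then obtain k :: int where "sum w A = sqrt d * k"
    using sum_abs_eq_const_imp_int_multiple[OF assms(1)] by blast
  with \<open>d \<ge> 0\<close> show ?thesis
    by (intro exI[of _ k]) (simp add: power_mult_distrib)
qed (intro exI[of _ 0], simp)

(* In the notation of the paper p = alpha^2 + beta^2 = 14 / (n + 12) and
   e = alpha^2 beta^2 = 7 (n + 40) / ((n + 10) (n + 12)^2), so that t^4 - p t^2 + e is
   (t^2 - alpha^2)(t^2 - beta^2); tight says that the bound |Y| >= b_{n,T} is attained. *)

lemma tight_design_integrality:
  fixes Y :: "(real^'n::finite) set" and p e M \<mu> \<nu> :: real
  assumes design: "harmonic_index_design {8, 2} Y" and "Y \<noteq> {}"
    and annihilator: "\<And>t. (t ^ 4 - p * t\<^sup>2 + e)\<^sup>2 = gegenbauer8 CARD('n) t / M + \<mu> * t\<^sup>2 + \<nu>"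
    and tight: "\<mu> * card Y / CARD('n) + \<nu> * card Y = (1 - p + e)\<^sup>2"
  shows "\<exists>k::int. (card Y / CARD('n) - 1 - (real (card Y) - 1) * p / 2)\<^sup>2 = (p\<^sup>2 / 4 - e) * (of_int k)\<^sup>2"
proof -
  define G where "G t = t ^ 4 - p * t\<^sup>2 + e" for t :: real
  obtain y where y: "y \<in> Y" using \<open>Y \<noteq> {}\<close> by blast
  have finite: "finite Y" and sphere: "Y \<subseteq> unit_sphere"
    using design by (auto simp: harmonic_index_design_def)
  then have yy: "y \<bullet> y = 1"
    using y by (auto intro: inner_self_eq_1_if_unit_sphere)
  have squares: "(\<Sum>x\<in>Y. (x \<bullet> y)\<^sup>2) = card Y / CARD('n)"
    using design y sphere by (intro design_inner_square_sum) auto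
  have "(\<Sum>x\<in>Y. (G (x \<bullet> y))\<^sup>2)
      = (\<Sum>x\<in>Y. gegenbauer8 CARD('n) (x \<bullet> y)) / M + \<mu> * (\<Sum>x\<in>Y. (x \<bullet> y)\<^sup>2) + \<nu> * card Y"
    by (simp add: G_def annihilator sum.distrib sum_divide_distrib sum_distrib_left)
  also have "\<dots> = (G (y \<bullet> y))\<^sup>2"
    using design y sphere tight yy
    by (simp add: design_gegenbauer8_sum squares G_def subset_eq mult.assoc)
  finally have root: "G (x \<bullet> y) = 0" if "x \<in> Y - {y}" for x
    using sum_power2_eq_power2_term_imp_eq_0[where g="\<lambda>x. G (x \<bullet> y)", OF finite y _ that] by blast
  have deviation: "((x \<bullet> y)\<^sup>2 - p / 2)\<^sup>2 = p\<^sup>2 / 4 - e" if "x \<in> Y - {y}" for x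
  proof -
    have "((x \<bullet> y)\<^sup>2 - p / 2)\<^sup>2 = G (x \<bullet> y) + (p\<^sup>2 / 4 - e)"
      unfolding G_def by (simp add: field_simps power2_eq_square power4_eq_xxxx)
    with root[OF that] show ?thesis by simp
  qed
  from sum_power2_eq_const_mult_int_power2[OF finite_Diff[OF finite] deviation]
  obtain k :: int where k: "(\<Sum>x\<in>Y - {y}. (x \<bullet> y)\<^sup>2 - p / 2)\<^sup>2 = (p\<^sup>2 / 4 - e) * (of_int k)\<^sup>2" ..
  have "0 < card Y"
    using finite y card_gt_0_iff by blast
  then have "real (card (Y - {y})) = real (card Y) - 1"
    using y by (simp add: card_Diff_singleton of_nat_diff)
  moreover have "(\<Sum>x\<in>Y - {y}. (x \<bullet> y)\<^sup>2) = card Y / CARD('n) - 1"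
    using sum.remove[OF finite y, of "\<lambda>x. (x \<bullet> y)\<^sup>2"] squares yy by simp
  ultimately have "(\<Sum>x\<in>Y - {y}. (x \<bullet> y)\<^sup>2 - p / 2) = card Y / CARD('n) - 1 - (real (card Y) - 1) * p / 2"
    by (simp add: sum_subtractf)
  with k show ?thesis by metis
qed

section \<open>Integrality of the tight size\<close>

definition tight_numerator :: "nat \<Rightarrow> nat"
  where "tight_numerator n = n * (n + 6) * (n + 5) * (n\<^sup>2 + 15 * n + 8)\<^sup>2"

(* The subtraction never truncates: n^3 + 27 n^2 + 356 n >= 384 for n >= 1. *)

definition tight_denominator :: "nat \<Rightarrow> nat"
  where "tight_denominator n = n ^ 3 + 27 * n\<^sup>2 + 356 * n - 240"

lemma of_nat_tight_denominator:
  assumes "n \<ge> 1"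
  shows "(of_nat (tight_denominator n) :: 'a::comm_ring_1) = of_nat n ^ 3 + 27 * of_nat n ^ 2 + 356 * of_nat n - 240"
proof -
  have "240 \<le> n ^ 3 + 27 * n\<^sup>2 + 356 * n"
    using assms by (simp add: power2_eq_square power3_eq_cube)
  then show ?thesis
    by (simp add: tight_denominator_def of_nat_diff)
qed

lemma tight_size_dvd:
  fixes n c :: nat
  assumes "n \<ge> 2"
    and size: "real c = real n * (real n + 6) * (real n + 5) * (real n ^ 2 + 15 * real n + 8) ^ 2
      / (168 * (real n ^ 3 + 27 * real n ^ 2 + 356 * real n - 240))"
  shows "168 * tight_denominator n dvd tight_numerator n"
proof -
  have den: "real (tight_denominator n) = real n ^ 3 + 27 * real n ^ 2 + 356 * real n - 240"
    using assms(1) by (simp add: of_nat_tight_denominator)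
  have "tight_denominator n > 0"
    using assms(1) by (simp add: tight_denominator_def)
  then have "real (c * (168 * tight_denominator n)) = real (tight_numerator n)"
    using size unfolding den[symmetric] by (simp add: tight_numerator_def field_simps)
  then show ?thesis
    by (metis dvd_triv_right of_nat_eq_iff)
qed

lemma tight_denominator_dvd_constant:
  assumes "n \<ge> 1" and "tight_denominator n dvd tight_numerator n"
  shows "tight_denominator n dvd 7468070400"
proof -
  define m where "m = int n"
  have bezout: "7468070400 = (8 * 169344 * (1216 * m - 7124) - ((1216 * m - 7124) * (2 * m + 67) + 1386240)
        * (m ^ 4 + 14 * m ^ 3 - 133 * m\<^sup>2 + 2638 * m - 10584)) * (m ^ 3 + 27 * m\<^sup>2 + 356 * m - 240)
      + ((1216 * m - 7124) * (2 * m + 67) + 1386240) * (m * (m + 6) * (m + 5) * (m\<^sup>2 + 15 * m + 8)\<^sup>2)"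
    by (simp add: algebra_simps power2_eq_square power3_eq_cube power4_eq_xxxx)
  have "int (tight_denominator n) = m ^ 3 + 27 * m\<^sup>2 + 356 * m - 240"
    using assms(1) by (simp add: m_def of_nat_tight_denominator)
  moreover have "int (tight_numerator n) = m * (m + 6) * (m + 5) * (m\<^sup>2 + 15 * m + 8)\<^sup>2"
    by (simp add: m_def tight_numerator_def)
  ultimately have "int (tight_denominator n) dvd 7468070400"
    using assms(2) unfolding bezout by (metis dvd_add dvd_mult dvd_refl int_dvd_int_iff)
  then show ?thesis
    by (metis int_dvd_int_iff of_nat_numeral)
qed

function all_in_range :: "(nat \<Rightarrow> bool) \<Rightarrow> nat \<Rightarrow> nat \<Rightarrow> bool" where
  "all_in_range P a b = (if b \<le> a then True else P a \<and> all_in_range P (Suc a) b)"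
  by auto
termination by (relation "Wellfounded.measure (\<lambda>(P, a, b). b - a)") auto

declare all_in_range.simps [simp del]

lemma all_in_range_iff: "all_in_range P a b \<longleftrightarrow> (\<forall>n\<in>{a..<b}. P n)"
proof (induction P a b rule: all_in_range.induct)
  case (1 P a b)
  then show ?case
    by (subst all_in_range.simps) (auto simp: Suc_le_eq le_less_Suc_eq)
qed

lemma tight_denominator_dvd_constant_cases:
  assumes "n \<ge> 2" and dvd: "tight_denominator n dvd 7468070400"
  shows "n \<in> {2, 4, 9, 16, 25, 30, 65}"
proof -
  define P where "P n \<longleftrightarrow> 7468070400 mod tight_denominator n \<noteq> 0 \<or> n \<in> {2, 4, 9, 16, 25, 30, 65}" for n
  have "all_in_range P 2 1955"
    by (simp add: all_in_range.simps P_def tight_denominator_def)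
  then have "P n" if "n \<in> {2..<1955}" for n
    using that unfolding all_in_range_iff by fastforce
  moreover have "n < 1955"
  proof (rule ccontr)
    assume "\<not> n < 1955"
    then have "1955 ^ 3 \<le> n ^ 3"
      by (intro power_mono) simp_all
    then have "7468070400 < tight_denominator n"
      by (simp add: tight_denominator_def)
    with dvd show False
      using dvd_imp_le by fastforce
  qed
  ultimately have "P n"
    using assms(1) by simp
  then show ?thesis
    using dvd by (auto simp: P_def dvd_eq_mod_eq_0)
qed

lemma tight_size_integral_cases:
  assumes "n \<ge> 2" and dvd: "168 * tight_denominator n dvd tight_numerator n"
  shows "n \<in> {2, 4, 9}"
proof -
  have "tight_denominator n dvd tight_numerator n"
    using dvd dvd_mult_right by blast
  then have "n \<in> {2, 4, 9, 16, 25, 30, 65}"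
    using assms(1) by (intro tight_denominator_dvd_constant_cases tight_denominator_dvd_constant) auto
  moreover have "n \<notin> {16, 25, 30, 65}"
    using dvd by (auto simp: tight_denominator_def tight_numerator_def)
  ultimately show ?thesis by blast
qed

lemma not_square_between_consecutive_squares:
  fixes a k :: int
  assumes "0 \<le> a" and "a\<^sup>2 < k\<^sup>2"
  shows "\<not> k\<^sup>2 < (a + 1)\<^sup>2"
proof -
  have "a < \<bar>k\<bar>"
    using assms by (metis abs_ge_zero power2_abs power_less_imp_less_base)
  then have "(a + 1)\<^sup>2 \<le> \<bar>k\<bar>\<^sup>2"
    using assms(1) by (intro power_mono) simp_all
  then show ?thesis
    by simp
qed

lemma no_tight_design_of_nonsquare:
  fixes Y :: "(real^'n::finite) set" and p e M \<mu> \<nu> :: real and a m :: int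
  assumes design: "harmonic_index_design {8, 2} Y" and "Y \<noteq> {}"
    and annihilator: "\<And>t. (t ^ 4 - p * t\<^sup>2 + e)\<^sup>2 = gegenbauer8 CARD('n) t / M + \<mu> * t\<^sup>2 + \<nu>"
    and tight: "\<mu> * card Y / CARD('n) + \<nu> * card Y = (1 - p + e)\<^sup>2"
    and m: "(card Y / CARD('n) - 1 - (real (card Y) - 1) * p / 2)\<^sup>2 = (p\<^sup>2 / 4 - e) * m"
    and "p\<^sup>2 / 4 \<noteq> e" and "0 \<le> a" and "a\<^sup>2 < m" and "m < (a + 1)\<^sup>2"
  shows False
proof -
  obtain k :: int
    where "(card Y / CARD('n) - 1 - (real (card Y) - 1) * p / 2)\<^sup>2 = (p\<^sup>2 / 4 - e) * (of_int k)\<^sup>2"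
    using tight_design_integrality[OF design \<open>Y \<noteq> {}\<close> annihilator tight] by blast
  with m \<open>p\<^sup>2 / 4 \<noteq> e\<close> have "m = k\<^sup>2"
    by (metis of_int_eq_iff of_int_power mult_cancel_left right_minus_eq)
  then show False
    using not_square_between_consecutive_squares assms(7-9) by blast
qed

(* M, mu and nu come from expanding the squared annihilator in gegenbauer8, t^2 and 1. *)

lemma no_tight_design_dim2:
  fixes Y :: "(real^'n::finite) set"
  assumes "CARD('n) = 2" and "harmonic_index_design {8, 2} Y" and "card Y = 2"
  shows False
  by (rule no_tight_design_of_nonsquare[where p=1 and e="1/8" and M=13440 and \<mu>=0 and \<nu>="1/128"
        and m=2 and a=1, OF assms(2)])
     (use assms in \<open>auto simp: gegenbauer8_def field_simps eval_nat_numeral\<close>)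

lemma no_tight_design_dim4:
  fixes Y :: "(real^'n::finite) set"
  assumes "CARD('n) = 4" and "harmonic_index_design {8, 2} Y" and "card Y = 9"
  shows False
  by (rule no_tight_design_of_nonsquare[where p="7/8" and e="11/128" and M=26880 and \<mu>="3/512"
        and \<nu>="57/16384" and m=48 and a=6, OF assms(2)])
     (use assms in \<open>auto simp: gegenbauer8_def field_simps eval_nat_numeral\<close>)

lemma no_tight_design_dim9:
  fixes Y :: "(real^'n::finite) set"
  assumes "CARD('n) = 9" and "harmonic_index_design {8, 2} Y" and "card Y = 96"
  shows False
  by (rule no_tight_design_of_nonsquare[where p="2/3" and e="7/171" and M=101745 and \<mu>="64/8721"
        and \<nu>="320/497097" and m=6897 and a=83, OF assms(2)])
     (use assms in \<open>auto simp: gegenbauer8_def field_simps eval_nat_numeral\<close>)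

theorem mainTheorem9:
  fixes n :: nat
  assumes "n = CARD('n::finite)" and "n \<ge> 2"
  shows "\<not> (\<exists>Y :: (real^'n) set. harmonic_index_design {8, 2} Y \<and>
            real (card Y) = real n * (real n + 6) * (real n + 5) * (real n ^ 2 + 15 * real n + 8) ^ 2
              / (168 * (real n ^ 3 + 27 * real n ^ 2 + 356 * real n - 240)))"
proof (intro notI, elim exE conjE)
  fix Y :: "(real^'n) set"
  assume design: "harmonic_index_design {8, 2} Y"
    and size: "real (card Y) = real n * (real n + 6) * (real n + 5) * (real n ^ 2 + 15 * real n + 8) ^ 2
      / (168 * (real n ^ 3 + 27 * real n ^ 2 + 356 * real n - 240))"
  have "n \<in> {2, 4, 9}"
    using assms(2) tight_size_dvd[OF assms(2) size] by (rule tight_size_integral_cases)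
  then show False
  proof (elim insertE emptyE)
    assume "n = 2"
    with size assms(1) show False by (intro no_tight_design_dim2[OF _ design]) simp_all
  next
    assume "n = 4"
    with size assms(1) show False by (intro no_tight_design_dim4[OF _ design]) simp_all
  next
    assume "n = 9"
    with size assms(1) show False by (intro no_tight_design_dim9[OF _ design]) simp_all
  qed
qed

end
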